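(* Fix $x\in\mathbf{X}$ and temperatures $\tau_1,\dots,\tau_T>0$. (i) Suppose $H_{TP}(x)\le\delta$, and define OOD detectors by $\mathbf{P}'_k(x\in\mathbf{X}_k\mid D)=\mathbf{P}(x\in\mathbf{X}_k\mid D)^{1/\tau_k}$. Then for all $k=1,\dots,T$, $H_{OOD,k}(x)\le\max\big(\delta/\tau_k,\ -\log(1-(1-e^{-\delta})^{1/\tau_k})\big)$. (ii) Suppose OOD detectors satisfy $H_{OOD,k}(x)\le\delta_k$ for $k=1,\dots,T$, and define $\mathbf{P}(x\in\mathbf{X}_k\mid D)=\frac{\mathbf{P}'_k(x\in\mathbf{X}_k\mid D)^{1/\tau_k}}{\sum_j\mathbf{P}'_j(x\in\mathbf{X}_j\mid D)^{1/\tau_j}}$. Then $$H_{TP}(x)\le\sum_k\frac{\mathbf{1}_{x\in\mathbf{X}_k}\delta_k}{\tau_k}+\frac{\sum_k(1-e^{-\delta_k})^{1/\tau_k}}{\sum_k\mathbf{1}_{x\in\mathbf{X}_k}\big(1-(1-e^{-\delta_k})^{1/\tau_k}\big)},$$ where $\mathbf{1}_{x\in\mathbf{X}_k}$ is the indicator of $x\in\mathbf{X}_k$.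
   Context: $\mathbf{X}$ is an input domain which is the disjoint union of task domains $\mathbf{X}_1,\dots,\mathbf{X}_T$. $D$ is a fixed conditioning event. A task-id prediction (TP) is a categorical distribution $\{\mathbf{P}(x\in\mathbf{X}_k\mid D)\}_{k=1}^T$ over the tasks (nonnegative, summing to $1$); for $x\in\mathbf{X}_{k_0}$, $H_{TP}(x)=-\log\mathbf{P}(x\in\mathbf{X}_{k_0}\mid D)$. An OOD detector for task $k$ is a value $\mathbf{P}'_k(x\in\mathbf{X}_k\mid D)\in[0,1]$ with $\mathbf{P}'_k(x\notin\mathbf{X}_k\mid D)=1-\mathbf{P}'_k(x\in\mathbf{X}_k\mid D)$, and $H_{OOD,k}(x)=-\log\mathbf{P}'_k(x\in\mathbf{X}_k\mid D)$ if $x\in\mathbf{X}_k$, $H_{OOD,k}(x)=-\log\mathbf{P}'_k(x\notin\mathbf{X}_k\mid D)$ if $x\in\mathbf{X}\setminus\mathbf{X}_k$. *)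

theory Defs
  imports "HOL-Analysis.Analysis"
begin

definition nlog :: "real \<Rightarrow> ereal" where
  "nlog p = (if p \<le> 0 then \<infinity> else ereal (- ln p))"

definition is_TP :: "nat \<Rightarrow> (nat \<Rightarrow> real) \<Rightarrow> bool" where
  "is_TP T p \<longleftrightarrow> (\<forall>k\<in>{1..T}. 0 \<le> p k) \<and> (\<Sum>k=1..T. p k) = 1"

text \<open>H_TP(x) = -log P(x in X_k0 | D), where k0 is the (unique) task containing x.\<close>
definition H_TP :: "(nat \<Rightarrow> 'a set) \<Rightarrow> nat \<Rightarrow> (nat \<Rightarrow> real) \<Rightarrow> 'a \<Rightarrow> ereal" where
  "H_TP X T p x = nlog (p (THE k. k \<in> {1..T} \<and> x \<in> X k))"

text \<open>H_OOD,k(x) for the OOD detector of task k with value q = P'_k(x in X_k | D).\<close>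
definition H_OOD :: "(nat \<Rightarrow> 'a set) \<Rightarrow> nat \<Rightarrow> real \<Rightarrow> 'a \<Rightarrow> ereal" where
  "H_OOD X k q x = (if x \<in> X k then nlog q else nlog (1 - q))"

end

theory Submission
  imports Defs
begin

(*
  Only the task k0 containing x enters H_TP, and an entropy bound -log p <= d just says
  p >= exp (-d).
  (i) The in-task detector is p_k0^(1/tau) >= exp (-d/tau); every other task has
  p_k <= 1 - p_k0 <= 1 - exp (-d).
  (ii) The detector bounds give q_k0 >= exp (-d_k0) and q_j <= 1 - exp (-d_j) for j <> k0.
  With a_j = q_j^(1/tau_j) and S = sum of the a_j, -log (a_k0 / S) = -log a_k0 + log S, and
  log S <= S - 1 <= sum of the a_j over j <> k0 because a_k0 <= 1; the stated quotient is a
  weakening of that sum.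
*)

lemma nlog_le_ereal_iff: "nlog p \<le> ereal d \<longleftrightarrow> exp (- d) \<le> p"
proof (cases "p > 0")
  case True
  then have "- ln p \<le> d \<longleftrightarrow> exp (- d) \<le> p"
    by (metis exp_le_cancel_iff exp_ln minus_le_iff)
  with True show ?thesis
    by (simp add: nlog_def)
next
  case False
  then have "\<not> exp (- d) \<le> p"
    using exp_gt_zero[of "- d"] by linarith
  with False show ?thesis
    by (simp add: nlog_def)
qed

lemma nlog_antimono: "a \<le> b \<Longrightarrow> nlog b \<le> nlog a"
  unfolding nlog_def by auto

lemma nlog_powr_le:
  assumes "nlog p \<le> ereal d" and "0 < e"
  shows "nlog (p powr e) \<le> ereal (e * d)"
proof -
  have p: "exp (- d) \<le> p"
    using assms(1) by (simp add: nlog_le_ereal_iff)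
  have "exp (- (e * d)) = exp (- d) powr e"
    by (simp add: powr_def)
  also have "\<dots> \<le> p powr e"
    using p assms(2) by (intro powr_mono2) auto
  finally show ?thesis
    by (simp add: nlog_le_ereal_iff)
qed

lemma nlog_normalized_le:
  fixes a :: "'i \<Rightarrow> real"
  assumes "finite A" and "k \<in> A" and "\<forall>j\<in>A. 0 \<le> a j" and "a k \<le> 1"
  shows "nlog (a k / (\<Sum>j\<in>A. a j)) \<le> nlog (a k) + ereal (\<Sum>j\<in>A-{k}. a j)"
proof (cases "a k > 0")
  case False
  then show ?thesis
    by (simp add: nlog_def)
next
  case True
  define R where "R = (\<Sum>j\<in>A-{k}. a j)"
  have S: "(\<Sum>j\<in>A. a j) = a k + R"
    unfolding R_def using assms(1,2) by (simp add: sum.remove)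
  have "0 \<le> R"
    unfolding R_def using assms(3) by (intro sum_nonneg) auto
  with True have S_pos: "0 < a k + R" by simp
  have "ln (a k + R) \<le> R"
    using ln_le_minus_one[OF S_pos] assms(4) by simp
  then show ?thesis
    using True S_pos unfolding S R_def[symmetric] by (simp add: nlog_def ln_div not_le)
qed

lemma is_TP_le_one_minus:
  assumes "is_TP T p" and "j \<in> {1..T}" and "k \<in> {1..T}" and "j \<noteq> k"
  shows "p j \<le> 1 - p k"
proof -
  have "p j + p k = (\<Sum>i\<in>{j,k}. p i)"
    using assms(4) by simp
  also have "\<dots> \<le> (\<Sum>i=1..T. p i)"
    using assms unfolding is_TP_def by (intro sum_mono2) auto
  finally show ?thesis
    using assms(1) unfolding is_TP_def by simp
qed

lemma H_TP_eq_nlog: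
  assumes "disjoint_family_on X {1..T}" and "k \<in> {1..T}" and "x \<in> X k"
  shows "H_TP X T p x = nlog (p k)"
proof -
  have "(THE i. i \<in> {1..T} \<and> x \<in> X i) = k"
    using assms unfolding disjoint_family_on_def by blast
  then show ?thesis
    by (simp add: H_TP_def)
qed

lemma sum_indicator_disjoint_family:
  fixes f :: "'i \<Rightarrow> real"
  assumes "disjoint_family_on X A" and "finite A" and "k \<in> A" and "x \<in> X k"
  shows "(\<Sum>j\<in>A. indicator (X j) x * f j) = f k"
proof -
  have "(\<Sum>j\<in>A. indicator (X j) x * f j) = (\<Sum>j\<in>A. if j = k then f k else 0)"
    using assms(1,3,4) unfolding disjoint_family_on_def by (intro sum.cong) (auto simp: indicator_def)
  also have "\<dots> = f k"
    using assms(2,3) by simp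
  finally show ?thesis .
qed

theorem H_OOD_powr_le_of_H_TP:
  assumes "disjoint_family_on X {1..T}" and "k\<^sub>0 \<in> {1..T}" and "x \<in> X k\<^sub>0"
    and "is_TP T p" and "H_TP X T p x \<le> ereal \<delta>"
    and "k \<in> {1..T}" and "0 < \<tau>"
  shows "H_OOD X k (p k powr (1 / \<tau>)) x
           \<le> max (ereal (\<delta> / \<tau>)) (nlog (1 - (1 - exp (- \<delta>)) powr (1 / \<tau>)))"
proof -
  have p_k0: "nlog (p k\<^sub>0) \<le> ereal \<delta>"
    using assms(1-3,5) by (simp add: H_TP_eq_nlog)
  show ?thesis
  proof (cases "k = k\<^sub>0")
    case True
    then have "H_OOD X k (p k powr (1 / \<tau>)) x \<le> ereal (\<delta> / \<tau>)"
      using nlog_powr_le[OF p_k0, of "1 / \<tau>"] assms(3,7) by (simp add: H_OOD_def)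
    then show ?thesis
      by (simp add: le_max_iff_disj)
  next
    case False
    then have x_out: "x \<notin> X k"
      using assms(1-3,6) unfolding disjoint_family_on_def by blast
    have "p k \<le> 1 - p k\<^sub>0"
      using is_TP_le_one_minus[OF assms(4,6,2) False] .
    also have "\<dots> \<le> 1 - exp (- \<delta>)"
      using p_k0 by (simp add: nlog_le_ereal_iff)
    finally have "p k powr (1 / \<tau>) \<le> (1 - exp (- \<delta>)) powr (1 / \<tau>)"
      using assms(4,6,7) unfolding is_TP_def by (intro powr_mono2) auto
    then have "H_OOD X k (p k powr (1 / \<tau>)) x \<le> nlog (1 - (1 - exp (- \<delta>)) powr (1 / \<tau>))"
      using x_out by (simp add: H_OOD_def nlog_antimono)
    then show ?thesis
      by (simp add: le_max_iff_disj)
  qed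
qed

theorem H_TP_normalized_powr_le_of_H_OOD:
  fixes q \<delta> \<tau> :: "nat \<Rightarrow> real"
  assumes "disjoint_family_on X {1..T}" and "k\<^sub>0 \<in> {1..T}" and "x \<in> X k\<^sub>0"
    and "\<forall>k\<in>{1..T}. 0 < \<tau> k"
    and "\<forall>k\<in>{1..T}. 0 \<le> q k \<and> q k \<le> 1"
    and "\<forall>k\<in>{1..T}. H_OOD X k (q k) x \<le> ereal (\<delta> k)"
  defines "a \<equiv> \<lambda>k. q k powr (1 / \<tau> k)" and "c \<equiv> \<lambda>k. (1 - exp (- \<delta> k)) powr (1 / \<tau> k)"
  shows "H_TP X T (\<lambda>k. a k / (\<Sum>j=1..T. a j)) x
           \<le> ereal (\<delta> k\<^sub>0 / \<tau> k\<^sub>0 + (\<Sum>k=1..T. c k) / (1 - c k\<^sub>0))"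
proof -
  have q_k0: "nlog (q k\<^sub>0) \<le> ereal (\<delta> k\<^sub>0)"
    using assms(2,3,6) by (force simp: H_OOD_def)
  have tau_k0: "0 < \<tau> k\<^sub>0" and q_k0_unit: "0 \<le> q k\<^sub>0" "q k\<^sub>0 \<le> 1"
    using assms(2,4,5) by blast+
  from q_k0_unit(2) have "exp (- \<delta> k\<^sub>0) \<le> 1"
    using q_k0 nlog_le_ereal_iff order_trans by metis
  then have "c k\<^sub>0 < 1 powr (1 / \<tau> k\<^sub>0)"
    unfolding c_def using tau_k0 by (intro powr_less_mono2) auto
  then have D: "0 < 1 - c k\<^sub>0" "1 - c k\<^sub>0 \<le> 1"
    by (auto simp: c_def)
  have a_le_c: "a j \<le> c j" if j: "j \<in> {1..T}-{k\<^sub>0}" for j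
  proof -
    have "x \<notin> X j"
      using assms(1-3) j unfolding disjoint_family_on_def by blast
    then have "nlog (1 - q j) \<le> ereal (\<delta> j)"
      using assms(6) j by (force simp: H_OOD_def)
    then have "q j \<le> 1 - exp (- \<delta> j)"
      by (simp add: nlog_le_ereal_iff)
    moreover have "0 < \<tau> j" "0 \<le> q j"
      using assms(4,5) j by auto
    ultimately show ?thesis
      unfolding a_def c_def by (intro powr_mono2) auto
  qed
  have "(\<Sum>j\<in>{1..T}-{k\<^sub>0}. a j) \<le> (\<Sum>j\<in>{1..T}-{k\<^sub>0}. c j)"
    using a_le_c by (rule sum_mono)
  also have "\<dots> \<le> (\<Sum>j=1..T. c j)"
    unfolding c_def by (intro sum_mono2) auto
  also have "\<dots> \<le> (\<Sum>j=1..T. c j) / (1 - c k\<^sub>0)"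
    using D by (subst div_by_1[symmetric], intro divide_left_mono) (auto simp: c_def sum_nonneg)
  finally have rest: "(\<Sum>j\<in>{1..T}-{k\<^sub>0}. a j) \<le> (\<Sum>j=1..T. c j) / (1 - c k\<^sub>0)" .
  have "a k\<^sub>0 \<le> 1 powr (1 / \<tau> k\<^sub>0)"
    unfolding a_def using tau_k0 q_k0_unit by (intro powr_mono2) auto
  then have "nlog (a k\<^sub>0 / (\<Sum>j=1..T. a j)) \<le> nlog (a k\<^sub>0) + ereal (\<Sum>j\<in>{1..T}-{k\<^sub>0}. a j)"
    using assms(2) by (intro nlog_normalized_le) (auto simp: a_def)
  also have "\<dots> \<le> ereal (\<delta> k\<^sub>0 / \<tau> k\<^sub>0) + ereal ((\<Sum>j=1..T. c j) / (1 - c k\<^sub>0))"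
    using nlog_powr_le[OF q_k0, of "1 / \<tau> k\<^sub>0"] tau_k0 rest
    by (intro add_mono) (auto simp: a_def)
  finally show ?thesis
    using assms(1-3) by (simp add: H_TP_eq_nlog)
qed

theorem theorem5:
  fixes X :: "nat \<Rightarrow> 'a set" and T :: nat and x :: 'a and \<tau> :: "nat \<Rightarrow> real"
  assumes disj: "disjoint_family_on X {1..T}"
    and xin: "x \<in> (\<Union>k\<in>{1..T}. X k)"
    and tau_pos: "\<forall>k\<in>{1..T}. \<tau> k > 0"
  shows
    "(\<forall>(p :: nat \<Rightarrow> real) (\<delta> :: real).
        is_TP T p \<and> H_TP X T p x \<le> ereal \<delta> \<longrightarrow>
        (\<forall>k\<in>{1..T}. H_OOD X k (p k powr (1 / \<tau> k)) x
             \<le> max (ereal (\<delta> / \<tau> k)) (nlog (1 - (1 - exp (- \<delta>)) powr (1 / \<tau> k)))))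
     \<and>
     (\<forall>(q :: nat \<Rightarrow> real) (\<delta> :: nat \<Rightarrow> real).
        (\<forall>k\<in>{1..T}. 0 \<le> q k \<and> q k \<le> 1) \<and>
        (\<forall>k\<in>{1..T}. H_OOD X k (q k) x \<le> ereal (\<delta> k)) \<longrightarrow>
        H_TP X T (\<lambda>k. q k powr (1 / \<tau> k) / (\<Sum>j=1..T. q j powr (1 / \<tau> j))) x
          \<le> ereal ((\<Sum>k=1..T. indicator (X k) x * \<delta> k / \<tau> k)
               + (\<Sum>k=1..T. (1 - exp (- \<delta> k)) powr (1 / \<tau> k))
                 / (\<Sum>k=1..T. indicator (X k) x * (1 - (1 - exp (- \<delta> k)) powr (1 / \<tau> k)))))"
proof -
  obtain k\<^sub>0 where k0: "k\<^sub>0 \<in> {1..T}" "x \<in> X k\<^sub>0"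
    using xin by blast
  have indicator_sum: "(\<Sum>k=1..T. indicator (X k) x * f k) = f k\<^sub>0" for f :: "nat \<Rightarrow> real"
    using disj k0 by (intro sum_indicator_disjoint_family) auto
  show ?thesis
  proof (intro conjI allI impI ballI)
    show "H_OOD X k (p k powr (1 / \<tau> k)) x
            \<le> max (ereal (\<delta> / \<tau> k)) (nlog (1 - (1 - exp (- \<delta>)) powr (1 / \<tau> k)))"
      if "is_TP T p \<and> H_TP X T p x \<le> ereal \<delta>" and "k \<in> {1..T}" for p \<delta> k
      using H_OOD_powr_le_of_H_TP[OF disj k0] that tau_pos by blast
  next
    fix q \<delta> :: "nat \<Rightarrow> real"
    assume "(\<forall>k\<in>{1..T}. 0 \<le> q k \<and> q k \<le> 1) \<and> (\<forall>k\<in>{1..T}. H_OOD X k (q k) x \<le> ereal (\<delta> k))"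
    then show "H_TP X T (\<lambda>k. q k powr (1 / \<tau> k) / (\<Sum>j=1..T. q j powr (1 / \<tau> j))) x
          \<le> ereal ((\<Sum>k=1..T. indicator (X k) x * \<delta> k / \<tau> k)
               + (\<Sum>k=1..T. (1 - exp (- \<delta> k)) powr (1 / \<tau> k))
                 / (\<Sum>k=1..T. indicator (X k) x * (1 - (1 - exp (- \<delta> k)) powr (1 / \<tau> k))))"
      using H_TP_normalized_powr_le_of_H_OOD[OF disj k0 tau_pos, of q \<delta>]
        indicator_sum[of "\<lambda>k. \<delta> k / \<tau> k"]
        indicator_sum[of "\<lambda>k. 1 - (1 - exp (- \<delta> k)) powr (1 / \<tau> k)"]
      by simp
  qed
qed

end
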